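(* (Brzozowski soundness of follow maps.) Let $\mathcal{V}$ be a finite token vocabulary, let $\mathcal{Q}$ be a query with constraint expression $\texttt{where}_\mathcal{Q}$, and let $L_\mathcal{Q} = \{ s \in \mathcal{V}^* \mid \texttt{where}_\mathcal{Q} \text{ evaluates to } \top \text{ on the variable store obtained by parsing } s \text{ according to } \mathcal{Q}\}$. Let $u \in \mathcal{V}^*$ be a partial interaction trace, let $T_\mathcal{Q} = \{ t \in \mathcal{V} \mid (ut)^{-1} L_\mathcal{Q} \neq \emptyset \}$ be the set of Brzozowski-admissible tokens, where for a prefix $w$ the Brzozowski derivative is $w^{-1}L_\mathcal{Q} = \{ p \in \mathcal{V}^* \mid wp \in L_\mathcal{Q}\}$, and let $M := \{ t \in \mathcal{V} \mid \mathrm{Follow}[\texttt{where}_\mathcal{Q}](u,t) \neq \mathrm{fin}(\bot)\}$ be the set of tokens allowed by the follow map. Then $T_\mathcal{Q} \subseteq M$.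
   Context: Setting: constrained decoding of a language model. A query $\mathcal{Q}$ produces an interaction trace, a string over the token vocabulary $\mathcal{V}$; hole variables of the query are filled by model-generated tokens, and the boolean constraint expression $\texttt{where}_\mathcal{Q}$ is evaluated on the variable store determined by a (possibly partial) trace. For a partial trace $w$ whose currently decoded hole variable is $v$, write $[\![ e ]\!]_{v \leftarrow w}$ for the evaluation of expression $e$ with $v$ assigned according to $w$. Final semantics: evaluation returns a value together with an annotation in $\{\mathrm{fin}, \mathrm{var}, \mathrm{inc}, \mathrm{dec}\}$ (fixed, may still change, monotonically increasing, monotonically decreasing as decoding continues). In particular, $[\![ e ]\!]_{v \leftarrow w} = \mathrm{fin}(\bot)$ means that $e$ evaluates to False on $w$ and on every extension $wp$, $p \in \mathcal{V}^*$, i.e. there is no $p \in \mathcal{V}^*$ with $[\![ e ]\!]_{v \leftarrow wp} \neq \bot$. Follow operator: $\mathrm{Follow}[e](u,t)$ (a "follow map") takes the partial trace $u$ and a candidate next token $t \in \mathcal{V}$ and returns an annotated approximation of the value of $e$ if $ut$ is validated next. It is sound in the sense that for every $t \in \mathcal{V}$, $\mathrm{Follow}[e](u,t) = \mathrm{fin}(\bot)$ implies $[\![ e ]\!]_{v \leftarrow ut} = \mathrm{fin}(\bot)$, where $v$ is the currently decoded hole variable. *)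

theory Defs
  imports Main
begin

text \<open>Annotations of the final semantics: fixed, variable, increasing, decreasing.\<close>
datatype annot = Fin | Var | Inc | Dec

type_synonym aval = "annot \<times> bool"

abbreviation fin_bot :: aval where "fin_bot \<equiv> (Fin, False)"

text \<open>The final semantics of the constraint expression where_Q is abstracted as a function
  eval from (partial) traces to annotated values; the currently decoded hole variable and the
  variable store are determined by the trace.  It is required to satisfy the defining property
  of fin(bot): evaluating to fin(bot) on w means False on w and on every extension w p.\<close>
definition fin_semantics :: "('v list \<Rightarrow> aval) \<Rightarrow> bool" where
  "fin_semantics eval \<longleftrightarrow>
     (\<forall>w. eval w = fin_bot \<longrightarrow> (\<not> (\<exists>p. snd (eval (w @ p)) \<noteq> False)))"

definition follow_sound :: "('v list \<Rightarrow> aval) \<Rightarrow> ('v list \<Rightarrow> 'v \<Rightarrow> aval) \<Rightarrow> 'v list \<Rightarrow> bool" where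
  "follow_sound eval Follow u \<longleftrightarrow>
     (\<forall>t. Follow u t = fin_bot \<longrightarrow> eval (u @ [t]) = fin_bot)"

definition lang :: "('v list \<Rightarrow> aval) \<Rightarrow> 'v list set" where
  "lang eval = {s. snd (eval s) = True}"

definition brz_deriv :: "'v list \<Rightarrow> 'v list set \<Rightarrow> 'v list set" where
  "brz_deriv w L = {p. w @ p \<in> L}"

definition admissible_tokens :: "('v list \<Rightarrow> aval) \<Rightarrow> 'v list \<Rightarrow> 'v set" where
  "admissible_tokens eval u = {t. brz_deriv (u @ [t]) (lang eval) \<noteq> {}}"

definition follow_tokens :: "('v list \<Rightarrow> 'v \<Rightarrow> aval) \<Rightarrow> 'v list \<Rightarrow> 'v set" where
  "follow_tokens Follow u = {t. Follow u t \<noteq> fin_bot}"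

end

theory Submission
  imports Defs
begin

lemma brz_deriv_lang_empty_if_fin_bot:
  assumes "fin_semantics eval"
    and "eval w = fin_bot"
  shows "brz_deriv w (lang eval) = {}"
  using assms unfolding fin_semantics_def brz_deriv_def lang_def by auto

theorem mainTheorem1:
  fixes eval :: "('v::finite) list \<Rightarrow> aval"
    and Follow :: "'v list \<Rightarrow> 'v \<Rightarrow> aval"
    and u :: "'v list"
  assumes "fin_semantics eval"
    and "follow_sound eval Follow u"
  shows "admissible_tokens eval u \<subseteq> follow_tokens Follow u"
proof
  fix t
  assume "t \<in> admissible_tokens eval u"
  then have "eval (u @ [t]) \<noteq> fin_bot"
    using brz_deriv_lang_empty_if_fin_bot [OF assms(1)]
    unfolding admissible_tokens_def by blast
  then show "t \<in> follow_tokens Follow u"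
    using assms(2) unfolding follow_sound_def follow_tokens_def by blast
qed

end
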